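(* Let $p,q>0$, $x\ge0$, $0\le y\le1$. Then both $y_k=B_{k,q}(x,y)$ and $y_k=\bar B_{k,q}(x,y)$ satisfy the four-term recurrence $$c_3y_{p+3}+c_2y_{p+2}+c_1y_{p+1}+c_0y_p=0,$$ where $$c_0=(p+q)y^2,\quad c_1=-y\left(p+1-\tfrac12xy+y(p+q)\right),\quad c_2=y\left(p+1-\tfrac12xy\right)-\tfrac12xy,\quad c_3=\tfrac12xy .$$
   Context: For $p,q>0$ and $0\le y\le 1$, $I_y(p,q)=\frac{1}{B(p,q)}\int_0^y t^{p-1}(1-t)^{q-1}\,dt$ is the regularized incomplete beta function, with $B(p,q)=\Gamma(p)\Gamma(q)/\Gamma(p+q)$. The cumulative noncentral beta distribution is $B_{p,q}(x,y)=e^{-x/2}\sum_{j=0}^\infty \frac{1}{j!}\left(\frac x2\right)^j I_y(p+j,q)$ for $x\ge0$, and its complement is $\bar B_{p,q}(x,y)=1-B_{p,q}(x,y)$. *)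

theory Defs
  imports "HOL-Analysis.Analysis"
begin

definition inc_beta_reg :: "real \<Rightarrow> real \<Rightarrow> real \<Rightarrow> real" where
  "inc_beta_reg p q y =
     integral {0..y} (\<lambda>t. t powr (p - 1) * (1 - t) powr (q - 1)) / Beta p q"

definition nc_beta :: "real \<Rightarrow> real \<Rightarrow> real \<Rightarrow> real \<Rightarrow> real" where
  "nc_beta p q x y =
     exp (- x / 2) * (\<Sum>j. (1 / fact j) * (x / 2) ^ j * inc_beta_reg (p + real j) q y)"

definition nc_beta_compl :: "real \<Rightarrow> real \<Rightarrow> real \<Rightarrow> real \<Rightarrow> real" where
  "nc_beta_compl p q x y = 1 - nc_beta p q x y"

end

theory Submission
  imports Defs
begin

text \<open>Write I_r for I_y(r,q). Integration by parts gives I_r - I_(r+1) = d_r with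
  d_r = y^r (1-y)^q / (r B(r,q)), and these gaps satisfy the first-order recurrence
  (r+1) d_(r+1) = y (r+q) d_r. Weight it by a^j/j! with a = x/2, r = p + j, and sum over j:
  the factor j is absorbed by the index shift j a^j/j! = a a^(j-1)/(j-1)!, and the result is a
  linear relation between the differences of four consecutive B_(p+k,q)(x,y), which is the
  recurrence. Its coefficients sum to zero, so 1 - B satisfies it as well.\<close>

definition inc_beta :: "real \<Rightarrow> real \<Rightarrow> real \<Rightarrow> real" where
  "inc_beta a b y = integral {0..y} (\<lambda>t. t powr (a - 1) * (1 - t) powr (b - 1))"

lemma inc_beta_reg_eq_inc_beta: "inc_beta_reg a b y = inc_beta a b y / Beta a b"
  unfolding inc_beta_reg_def inc_beta_def ..

lemma Beta_real_pos: "a > 0 \<Longrightarrow> b > 0 \<Longrightarrow> Beta a b > (0::real)"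
  unfolding Beta_def by (simp add: Gamma_real_pos)

lemma integrable_on_Beta_integrand:
  fixes a b y :: real
  assumes "a > 0" "b > 0" "y \<le> 1"
  shows "(\<lambda>t. t powr (a - 1) * (1 - t) powr (b - 1)) integrable_on {0..y}"
  by (rule integrable_on_subinterval[OF integrable_Beta'[OF assms(1,2)]]) (use assms in auto)

lemma inc_beta_nonneg:
  assumes "a > 0" "b > 0" "y \<le> 1"
  shows "0 \<le> inc_beta a b y"
  unfolding inc_beta_def
  by (intro integral_nonneg integrable_on_Beta_integrand) (use assms in auto)

lemma inc_beta_le_Beta:
  assumes "a > 0" "b > 0" "0 \<le> y" "y \<le> 1"
  shows "inc_beta a b y \<le> Beta a b"
proof -
  have "inc_beta a b y \<le> integral {0..1} (\<lambda>t. t powr (a - 1) * (1 - t) powr (b - 1))"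
    unfolding inc_beta_def
    by (intro integral_subset_le integrable_on_Beta_integrand integrable_Beta') (use assms in auto)
  also have "\<dots> = Beta a b"
    by (rule integral_unique[OF has_integral_Beta_real[OF assms(1,2)]])
  finally show ?thesis .
qed

lemma inc_beta_reg_bounds:
  assumes "a > 0" "b > 0" "0 \<le> y" "y \<le> 1"
  shows "0 \<le> inc_beta_reg a b y" "inc_beta_reg a b y \<le> 1"
  using inc_beta_nonneg[OF assms(1,2,4)] inc_beta_le_Beta[OF assms] Beta_real_pos[OF assms(1,2)]
  by (simp_all add: inc_beta_reg_eq_inc_beta)

lemma inc_beta_by_parts:
  fixes r q y :: real
  assumes "r > 0" "q > 0" "0 \<le> y" "y \<le> 1"
  shows "r * inc_beta r (q + 1) y - q * inc_beta (r + 1) q y = y powr r * (1 - y) powr q"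
proof -
  let ?F = "\<lambda>t. t powr r * (1 - t) powr q"
  let ?f = "\<lambda>t. r * (t powr (r - 1) * (1 - t) powr (q + 1 - 1))
                 - q * (t powr (r + 1 - 1) * (1 - t) powr (q - 1))"
  have "(?F has_vector_derivative ?f t) (at t)" if "t \<in> {0<..<y}" for t
  proof -
    have "(?F has_real_derivative ?f t) (at t)"
      using that assms by (auto intro!: derivative_eq_intros)
    then show ?thesis by (simp add: has_real_derivative_iff_has_vector_derivative)
  qed
  moreover have "continuous_on {0..y} ?F"
    using assms by (intro continuous_intros continuous_on_powr') auto
  ultimately have "(?f has_integral (?F y - ?F 0)) {0..y}"
    using assms(3) by (intro fundamental_theorem_of_calculus_interior) auto
  moreover have "integral {0..y} ?f = r * inc_beta r (q + 1) y - q * inc_beta (r + 1) q y"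
    unfolding inc_beta_def
    using assms integrable_on_Beta_integrand[of r "q + 1" y]
      integrable_on_Beta_integrand[of "r + 1" q y]
    by (subst integral_diff) (auto simp: integrable_on_cmult_iff)
  ultimately show ?thesis
    using assms(1) by (simp add: integral_unique)
qed

lemma inc_beta_split:
  fixes r q y :: real
  assumes "r > 0" "q > 0" "y \<le> 1"
  shows "inc_beta (r + 1) q y + inc_beta r (q + 1) y = inc_beta r q y"
proof -
  have "inc_beta (r + 1) q y + inc_beta r (q + 1) y = integral {0..y}
      (\<lambda>t. t powr (r + 1 - 1) * (1 - t) powr (q - 1) + t powr (r - 1) * (1 - t) powr (q + 1 - 1))"
    unfolding inc_beta_def using assms
    by (intro integral_add[symmetric] integrable_on_Beta_integrand) auto
  also have "\<dots> = inc_beta r q y"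
    unfolding inc_beta_def
  proof (rule integral_cong)
    fix t assume "t \<in> {0..y}"
    then have t_powr: "t powr r = t * t powr (r - 1)"
      and one_minus_t_powr: "(1 - t) powr q = (1 - t) * (1 - t) powr (q - 1)"
      using assms powr_add[of t "r - 1" 1] powr_add[of "1 - t" "q - 1" 1] by simp_all
    show "t powr (r + 1 - 1) * (1 - t) powr (q - 1) + t powr (r - 1) * (1 - t) powr (q + 1 - 1)
        = t powr (r - 1) * (1 - t) powr (q - 1)"
      by (simp add: t_powr one_minus_t_powr algebra_simps)
  qed
  finally show ?thesis .
qed

lemma inc_beta_plus1_left:
  fixes r q y :: real
  assumes "r > 0" "q > 0" "0 \<le> y" "y \<le> 1"
  shows "(r + q) * inc_beta (r + 1) q y = r * inc_beta r q y - y powr r * (1 - y) powr q"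
proof -
  have "inc_beta r (q + 1) y = inc_beta r q y - inc_beta (r + 1) q y"
    using inc_beta_split[OF assms(1,2,4)] by linarith
  from inc_beta_by_parts[OF assms, unfolded this] show ?thesis
    by (simp add: algebra_simps)
qed

lemma Beta_plus1_left_real:
  fixes r q :: real
  assumes "r > 0" "q > 0"
  shows "Beta (r + 1) q = r * Beta r q / (r + q)"
proof -
  have "(r + q) * Beta (r + 1) q = r * Beta r q"
    using assms(1) by (intro Beta_plus1_left) (auto elim: nonpos_Ints_cases)
  then show ?thesis using assms by (simp add: field_simps)
qed

lemma inc_beta_reg_minus_plus1:
  fixes r q y :: real
  assumes "r > 0" "q > 0" "0 \<le> y" "y \<le> 1"
  shows "inc_beta_reg r q y - inc_beta_reg (r + 1) q y = y powr r * (1 - y) powr q / (r * Beta r q)"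
proof -
  have "inc_beta (r + 1) q y = (r * inc_beta r q y - y powr r * (1 - y) powr q) / (r + q)"
    using inc_beta_plus1_left[OF assms] assms(1,2) by (simp add: field_simps)
  then show ?thesis
    unfolding inc_beta_reg_eq_inc_beta Beta_plus1_left_real[OF assms(1,2)]
    using Beta_real_pos[OF assms(1,2)] assms(1,2) by (simp add: field_simps)
qed

lemma inc_beta_reg_gap_recurrence:
  fixes r q y :: real
  assumes "r > 0" "q > 0" "0 \<le> y" "y \<le> 1"
  shows "(r + 1) * (inc_beta_reg (r + 1) q y - inc_beta_reg (r + 2) q y)
       = y * (r + q) * (inc_beta_reg r q y - inc_beta_reg (r + 1) q y)"
proof -
  have two: "r + 2 = (r + 1) + 1" and "r + 1 > 0" using assms(1) by simp_all
  have powr_Suc: "y powr (r + 1) = y * y powr r"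
    using assms(3) powr_add[of y r 1] by simp
  show ?thesis
    unfolding inc_beta_reg_minus_plus1[OF assms]
      inc_beta_reg_minus_plus1[OF \<open>r + 1 > 0\<close> assms(2-4), folded two] powr_Suc
      Beta_plus1_left_real[OF assms(1,2)]
    using Beta_real_pos[OF assms(1,2)] assms(1,2) by (simp add: divide_simps)
qed

definition poisson_series :: "real \<Rightarrow> (nat \<Rightarrow> real) \<Rightarrow> real" where
  "poisson_series a v = (\<Sum>j. a ^ j / fact j * v j)"

lemma bounded_range_shift: "bounded (range f) \<Longrightarrow> bounded (range (\<lambda>j. f (k + j)))"
  by (rule bounded_subset) auto

lemma summable_poisson_series:
  fixes v :: "nat \<Rightarrow> real"
  assumes "bounded (range v)"
  shows "summable (\<lambda>j. a ^ j / fact j * v j)"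
proof -
  obtain M where M: "\<And>j. \<bar>v j\<bar> \<le> M"
    using assms by (auto simp: bounded_iff)
  have "summable (\<lambda>j. M * (\<bar>a\<bar> ^ j / fact j))"
    using summable_exp[of "\<bar>a\<bar>"] by (intro summable_mult) (simp add: divide_inverse mult.commute)
  moreover have "norm (a ^ j / fact j * v j) \<le> M * (\<bar>a\<bar> ^ j / fact j)" for j
    using mult_left_mono[OF M[of j], of "\<bar>a\<bar> ^ j / fact j"]
    by (simp add: abs_mult power_abs mult.commute)
  ultimately show ?thesis
    by (rule summable_comparison_test')
qed

lemma poisson_series_sums:
  "bounded (range v) \<Longrightarrow> (\<lambda>j. a ^ j / fact j * v j) sums poisson_series a v"
  unfolding poisson_series_def by (rule summable_sums[OF summable_poisson_series])

lemma poisson_series_diff: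
  assumes "bounded (range v)" "bounded (range w)"
  shows "poisson_series a (\<lambda>j. v j - w j) = poisson_series a v - poisson_series a w"
  using sums_diff[OF poisson_series_sums[OF assms(1)] poisson_series_sums[OF assms(2)], of a a]
  unfolding poisson_series_def by (simp add: right_diff_distrib sums_iff)

lemma sums_poisson_series_index_mult:
  fixes h :: "nat \<Rightarrow> real"
  assumes "bounded (range h)"
  shows "(\<lambda>j. a ^ j / fact j * (real j * h j)) sums (a * poisson_series a (\<lambda>j. h (Suc j)))"
proof -
  have "bounded (range (\<lambda>j. h (Suc j)))"
    using bounded_range_shift[OF assms, of 1] by simp
  moreover have "(\<lambda>j. a ^ Suc j / fact (Suc j) * (real (Suc j) * h (Suc j)))
      = (\<lambda>j. a * (a ^ j / fact j * h (Suc j)))"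
    by (simp add: field_simps del: of_nat_Suc)
  ultimately have "(\<lambda>j. a ^ Suc j / fact (Suc j) * (real (Suc j) * h (Suc j)))
      sums (a * poisson_series a (\<lambda>j. h (Suc j)))"
    by (simp only: sums_mult poisson_series_sums)
  then show ?thesis
    by (subst (asm) sums_Suc_iff) simp
qed

lemma poisson_series_four_term_recurrence:
  fixes v :: "nat \<Rightarrow> real" and a p q y :: real
  assumes bounded: "bounded (range v)"
    and gap: "\<And>n. (p + real n + 1) * (v (Suc n) - v (Suc (Suc n)))
                  = y * (p + real n + q) * (v n - v (Suc n))"
  defines "S k \<equiv> poisson_series a (\<lambda>j. v (k + j))"
  shows "a * y * S 3 + (y * (p + 1 - a * y) - a * y) * S 2
           - y * (p + 1 - a * y + y * (p + q)) * S 1 + (p + q) * y\<^sup>2 * S 0 = 0"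
proof -
  define d where "d n = v n - v (Suc n)" for n
  define T where "T k = poisson_series a (\<lambda>j. d (k + j))" for k
  have bounded_d: "bounded (range d)"
    unfolding d_def using bounded bounded_range_shift[OF bounded, of 1]
    by (intro bounded_minus_comp) simp_all
  have T_eq: "T k = S k - S (Suc k)" for k
    using poisson_series_diff[OF bounded_range_shift[OF bounded, of k]
                                 bounded_range_shift[OF bounded, of "Suc k"]]
    unfolding T_def S_def d_def by simp
  have T_sums: "(\<lambda>j. a ^ j / fact j * d (k + j)) sums T k" for k
    unfolding T_def by (rule poisson_series_sums[OF bounded_range_shift[OF bounded_d]])
  have index_sums: "(\<lambda>j. a ^ j / fact j * (real j * d (k + j))) sums (a * T (Suc k))" for k
    using sums_poisson_series_index_mult[OF bounded_range_shift[OF bounded_d, of k]]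
    unfolding T_def by simp
  have gap_d: "(p + 1) * d (1 + j) + real j * d (1 + j) = y * (p + q) * d j + y * (real j * d j)" for j
    using gap[of j] unfolding d_def by (simp add: algebra_simps)
  have "(\<lambda>j. (p + 1) * (a ^ j / fact j * d (1 + j)) + a ^ j / fact j * (real j * d (1 + j)))
          sums ((p + 1) * T 1 + a * T 2)"
    using sums_add[OF sums_mult[OF T_sums[of 1]] index_sums[of 1]] by (simp add: numeral_2_eq_2)
  moreover have "(\<lambda>j. y * (p + q) * (a ^ j / fact j * d (0 + j))
                     + y * (a ^ j / fact j * (real j * d (0 + j))))
          sums (y * (p + q) * T 0 + y * (a * T 1))"
    using sums_add[OF sums_mult[OF T_sums[of 0]] sums_mult[OF index_sums[of 0]]] by simp
  moreover have "(p + 1) * (a ^ j / fact j * d (1 + j)) + a ^ j / fact j * (real j * d (1 + j))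
      = y * (p + q) * (a ^ j / fact j * d (0 + j)) + y * (a ^ j / fact j * (real j * d (0 + j)))" for j
    using arg_cong[OF gap_d[of j], of "\<lambda>z. a ^ j / fact j * z"]
    by (simp add: algebra_simps add_divide_distrib)
  ultimately have key: "(p + 1) * T 1 + a * T 2 = y * (p + q) * T 0 + y * (a * T 1)"
    by (simp add: sums_unique2)
  have T_vals: "T 0 = S 0 - S 1" "T 1 = S 1 - S 2" "T 2 = S 2 - S 3"
    using T_eq[of 0] T_eq[of 1] T_eq[of 2] by (simp_all add: numeral_2_eq_2 numeral_3_eq_3)
  have "a * y * S 3 + (y * (p + 1 - a * y) - a * y) * S 2
          - y * (p + 1 - a * y + y * (p + q)) * S 1 + (p + q) * y\<^sup>2 * S 0
      = - y * (((p + 1) * T 1 + a * T 2) - (y * (p + q) * T 0 + y * (a * T 1)))"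
    unfolding T_vals by (simp add: algebra_simps power2_eq_square)
  with key show ?thesis by simp
qed

lemma nc_beta_eq_poisson_series:
  "nc_beta (p + real k) q x y
     = exp (- x / 2) * poisson_series (x / 2) (\<lambda>j. inc_beta_reg (p + real (k + j)) q y)"
  unfolding nc_beta_def poisson_series_def by (simp add: add.assoc)

theorem mainTheorem7:
  fixes p q x y :: real
  assumes "p > 0" and "q > 0" and "x \<ge> 0" and "0 \<le> y" and "y \<le> 1"
  defines "c0 \<equiv> (p + q) * y^2"
      and "c1 \<equiv> - y * (p + 1 - x * y / 2 + y * (p + q))"
      and "c2 \<equiv> y * (p + 1 - x * y / 2) - x * y / 2"
      and "c3 \<equiv> x * y / 2"
  shows "c3 * nc_beta (p + 3) q x y + c2 * nc_beta (p + 2) q x y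
           + c1 * nc_beta (p + 1) q x y + c0 * nc_beta p q x y = 0
       \<and> c3 * nc_beta_compl (p + 3) q x y + c2 * nc_beta_compl (p + 2) q x y
           + c1 * nc_beta_compl (p + 1) q x y + c0 * nc_beta_compl p q x y = 0"
proof -
  define v where "v n = inc_beta_reg (p + real n) q y" for n
  define S where "S k = poisson_series (x / 2) (\<lambda>j. v (k + j))" for k
  have "bounded (range v)"
    unfolding bounded_iff v_def using inc_beta_reg_bounds[OF _ assms(2,4,5)] assms(1)
    by (intro exI[of _ 1]) (simp add: add_pos_nonneg)
  moreover have "(p + real n + 1) * (v (Suc n) - v (Suc (Suc n)))
      = y * (p + real n + q) * (v n - v (Suc n))" for n
    using inc_beta_reg_gap_recurrence[of "p + real n" q y] assms(1,2,4,5)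
    unfolding v_def by (simp add: ac_simps)
  ultimately have S_rec: "x / 2 * y * S 3 + (y * (p + 1 - x / 2 * y) - x / 2 * y) * S 2
      - y * (p + 1 - x / 2 * y + y * (p + q)) * S 1 + (p + q) * y\<^sup>2 * S 0 = 0"
    unfolding S_def by (rule poisson_series_four_term_recurrence)
  have "nc_beta (p + real k) q x y = exp (- x / 2) * S k" for k
    unfolding nc_beta_eq_poisson_series S_def v_def ..
  from this[of 0] this[of 1] this[of 2] this[of 3]
  have "c3 * nc_beta (p + 3) q x y + c2 * nc_beta (p + 2) q x y
          + c1 * nc_beta (p + 1) q x y + c0 * nc_beta p q x y
      = exp (- x / 2) * (x / 2 * y * S 3 + (y * (p + 1 - x / 2 * y) - x / 2 * y) * S 2
          - y * (p + 1 - x / 2 * y + y * (p + q)) * S 1 + (p + q) * y\<^sup>2 * S 0)"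
    unfolding c0_def c1_def c2_def c3_def by (simp add: algebra_simps)
  then have "c3 * nc_beta (p + 3) q x y + c2 * nc_beta (p + 2) q x y
          + c1 * nc_beta (p + 1) q x y + c0 * nc_beta p q x y = 0"
    unfolding S_rec by simp
  moreover have "c0 + c1 + c2 + c3 = 0"
    unfolding c0_def c1_def c2_def c3_def by (simp add: algebra_simps power2_eq_square)
  ultimately show ?thesis
    unfolding nc_beta_compl_def by (simp add: algebra_simps)
qed

end
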